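(* Let $G$ be a graph and let $\mathcal R=\{G_v: v\in V(G)\}$ be a family of pairwise vertex-disjoint graphs. Then $$\gamma_{gr}(G\hookleftarrow \mathcal R)\geq \max \left\{\gamma_{gr}(G,I)+\sum_{v\in I} \gamma_{gr}(G_v)-|I|\;:\; I \text{ is an independent set of } G\right\}.$$
   Context: All graphs are finite and simple. For a vertex $v$, $N[v]$ is its closed neighborhood. The $X$-join product $G\hookleftarrow \mathcal R$ is the graph obtained from $G$ by replacing every vertex $v$ by $G_v$: its vertex set is $\bigcup_{v\in V(G)}V(G_v)$, its edges are the edges of all $G_v$ together with all edges joining a vertex of $V(G_u)$ with a vertex of $V(G_v)$ whenever $uv\in E(G)$. For a sequence $S=(v_1,\dots,v_k)$ of distinct vertices, $\widehat S=\{v_1,\dots,v_k\}$ and $|S|=k$; the private neighborhood of $v_i$ with respect to $S$ is $PN_S(v_i)=N[v_i]\setminus\bigcup_{j<i}N[v_j]$. $S$ is a legal dominating sequence of $G$ if $\widehat S$ is a dominating set of $G$ and $PN_S(v_i)\neq\emptyset$ for all $i$; $\mathcal L(G)$ is the set of these. A Grundy dominating sequence is a legal dominating sequence of maximum length, and this length is the Grundy domination number $\gamma_{gr}(G)$. For $S\in\mathcal L(G)$, each vertex $x$ lies in $PN_S(v)$ for exactly one $v\in\widehat S$, called the footprinter $f_S(x)$ of $x$; $I_S=\{v: f_S(v)=v\}$. For an independent set $I$ of $G$, $\mathcal L(G,I)=\{S\in\mathcal L(G): I_S=I\}$ and $\gamma_{gr}(G,I)=\max\{|S|: S\in\mathcal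 L(G,I)\}$, with the convention that the maximum of the empty set is $-\infty$. *)

theory Defs
  imports Main "HOL-Library.Extended_Real"
begin

definition graph :: "'a set \<Rightarrow> ('a \<Rightarrow> 'a \<Rightarrow> bool) \<Rightarrow> bool" where
  "graph V E \<longleftrightarrow> finite V \<and> V \<noteq> {} \<and>
     (\<forall>x y. E x y \<longrightarrow> x \<in> V \<and> y \<in> V) \<and>
     (\<forall>x y. E x y \<longrightarrow> E y x) \<and> (\<forall>x. \<not> E x x)"

definition cnbh :: "('a \<Rightarrow> 'a \<Rightarrow> bool) \<Rightarrow> 'a \<Rightarrow> 'a set" where
  "cnbh E x = {y. y = x \<or> E x y}"

definition pn :: "('a \<Rightarrow> 'a \<Rightarrow> bool) \<Rightarrow> 'a list \<Rightarrow> nat \<Rightarrow> 'a set" where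
  "pn E S i = cnbh E (S ! i) - (\<Union>j<i. cnbh E (S ! j))"

definition dominating :: "'a set \<Rightarrow> ('a \<Rightarrow> 'a \<Rightarrow> bool) \<Rightarrow> 'a set \<Rightarrow> bool" where
  "dominating V E D \<longleftrightarrow> D \<subseteq> V \<and> (\<forall>x\<in>V. \<exists>v\<in>D. x \<in> cnbh E v)"

definition legal_dom_seq :: "'a set \<Rightarrow> ('a \<Rightarrow> 'a \<Rightarrow> bool) \<Rightarrow> 'a list \<Rightarrow> bool" where
  "legal_dom_seq V E S \<longleftrightarrow> distinct S \<and> dominating V E (set S) \<and>
     (\<forall>i<length S. pn E S i \<noteq> {})"

definition legal_seqs :: "'a set \<Rightarrow> ('a \<Rightarrow> 'a \<Rightarrow> bool) \<Rightarrow> 'a list set" where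
  "legal_seqs V E = {S. legal_dom_seq V E S}"

definition grundy_dom :: "'a set \<Rightarrow> ('a \<Rightarrow> 'a \<Rightarrow> bool) \<Rightarrow> nat" where
  "grundy_dom V E = Max (length ` legal_seqs V E)"

definition footprinter :: "('a \<Rightarrow> 'a \<Rightarrow> bool) \<Rightarrow> 'a list \<Rightarrow> 'a \<Rightarrow> 'a" where
  "footprinter E S x = (THE v. \<exists>i<length S. S ! i = v \<and> x \<in> pn E S i)"

definition self_footprinted :: "'a set \<Rightarrow> ('a \<Rightarrow> 'a \<Rightarrow> bool) \<Rightarrow> 'a list \<Rightarrow> 'a set" where
  "self_footprinted V E S = {v\<in>V. footprinter E S v = v}"

definition independent :: "'a set \<Rightarrow> ('a \<Rightarrow> 'a \<Rightarrow> bool) \<Rightarrow> 'a set \<Rightarrow> bool" where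
  "independent V E I \<longleftrightarrow> I \<subseteq> V \<and> (\<forall>x\<in>I. \<forall>y\<in>I. \<not> E x y)"

definition legal_seqs_I :: "'a set \<Rightarrow> ('a \<Rightarrow> 'a \<Rightarrow> bool) \<Rightarrow> 'a set \<Rightarrow> 'a list set" where
  "legal_seqs_I V E I = {S \<in> legal_seqs V E. self_footprinted V E S = I}"

definition grundy_dom_I :: "'a set \<Rightarrow> ('a \<Rightarrow> 'a \<Rightarrow> bool) \<Rightarrow> 'a set \<Rightarrow> ereal" where
  "grundy_dom_I V E I =
     (if legal_seqs_I V E I = {} then -\<infinity>
      else ereal (real (Max (length ` legal_seqs_I V E I))))"

definition xjoin_V :: "'a set \<Rightarrow> ('a \<Rightarrow> 'b set) \<Rightarrow> 'b set" where
  "xjoin_V V VV = (\<Union>v\<in>V. VV v)"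

definition xjoin_E :: "'a set \<Rightarrow> ('a \<Rightarrow> 'a \<Rightarrow> bool) \<Rightarrow> ('a \<Rightarrow> 'b set) \<Rightarrow>
    ('a \<Rightarrow> 'b \<Rightarrow> 'b \<Rightarrow> bool) \<Rightarrow> 'b \<Rightarrow> 'b \<Rightarrow> bool" where
  "xjoin_E V E VV EE x y \<longleftrightarrow>
     (\<exists>v\<in>V. x \<in> VV v \<and> y \<in> VV v \<and> EE v x y) \<or>
     (\<exists>u\<in>V. \<exists>v\<in>V. E u v \<and> x \<in> VV u \<and> y \<in> VV v)"

end

theory Submission
  imports Defs
begin

text \<open>Take a legal dominating sequence S of G with self-footprinted set I and replace every
  vertex v of S by a Grundy dominating sequence of G_v if v is in I, and by a single vertex
  of G_v otherwise. A vertex v in I is its own footprinter, so when it is played no vertex of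
  G_v is dominated yet and the Grundy sequence of G_v remains legal in the X-join; a vertex v
  not in I footprints a neighbour u, so no vertex of G_u is dominated yet and the chosen
  vertex of G_v footprints one of them. The result is a legal dominating sequence of the
  X-join of length |S| - |I| + sum over v in I of gamma_gr(G_v).\<close>

fun stepwise :: "('a \<Rightarrow> 'a \<Rightarrow> bool) \<Rightarrow> ('a \<Rightarrow> 'a set \<Rightarrow> bool) \<Rightarrow> 'a set \<Rightarrow> 'a list \<Rightarrow> bool" where
  "stepwise E P D [] = True"
| "stepwise E P D (x # xs) \<longleftrightarrow> P x D \<and> stepwise E P (D \<union> cnbh E x) xs"

abbreviation legal_from :: "('a \<Rightarrow> 'a \<Rightarrow> bool) \<Rightarrow> 'a set \<Rightarrow> 'a list \<Rightarrow> bool" where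
  "legal_from E \<equiv> stepwise E (\<lambda>x D. cnbh E x - D \<noteq> {})"

lemma stepwise_iff_nth:
  "stepwise E P D xs \<longleftrightarrow> (\<forall>k<length xs. P (xs ! k) (D \<union> (\<Union>j<k. cnbh E (xs ! j))))"
proof (induction xs arbitrary: D)
  case (Cons x xs)
  have "(\<Union>j<Suc k. cnbh E ((x # xs) ! j)) = cnbh E x \<union> (\<Union>j<k. cnbh E (xs ! j))" for k
    by (auto simp: lessThan_Suc_eq_insert_0)
  then show ?case
    using Cons.IH by (simp add: All_less_Suc2 Un_assoc del: lessThan_iff UN_iff)
qed simp

lemma stepwise_append:
  "stepwise E P D (xs @ ys) \<longleftrightarrow> stepwise E P D xs \<and> stepwise E P (D \<union> (\<Union>x\<in>set xs. cnbh E x)) ys"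
  by (induction xs arbitrary: D) (simp_all add: Un_assoc)

lemma legal_dom_seq_iff_legal_from:
  "legal_dom_seq V E S \<longleftrightarrow> distinct S \<and> dominating V E (set S) \<and> legal_from E {} S"
  by (simp add: legal_dom_seq_def stepwise_iff_nth pn_def)

lemma legal_from_transfer:
  assumes "legal_from E D xs" "\<forall>x\<in>set xs. cnbh E x = cnbh E' x \<inter> A" "D' \<inter> A \<subseteq> D"
  shows "legal_from E' D' xs"
  using assms
proof (induction xs arbitrary: D D')
  case (Cons x xs)
  have "cnbh E' x - D' \<noteq> {}"
    using Cons.prems by auto
  moreover have "legal_from E' (D' \<union> cnbh E' x) xs"
    using Cons.prems by (intro Cons.IH[of "D \<union> cnbh E x"]) auto
  ultimately show ?case by simp
qed simp

lemma pn_unique: "x \<in> pn E S i \<Longrightarrow> x \<in> pn E S j \<Longrightarrow> i = j"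
  unfolding pn_def by (metis DiffE UN_I lessThan_iff linorder_neqE_nat)

lemma footprinter_eqI: "i < length S \<Longrightarrow> x \<in> pn E S i \<Longrightarrow> footprinter E S x = S ! i"
  unfolding footprinter_def by (rule the_equality) (auto dest: pn_unique)

lemma ex_pn_if_dominated:
  assumes "x \<in> cnbh E v" "v \<in> set S"
  shows "\<exists>j<length S. x \<in> pn E S j"
proof -
  have ex: "\<exists>i. i < length S \<and> x \<in> cnbh E (S ! i)"
    using assms by (metis in_set_conv_nth)
  define j where "j = (LEAST i. i < length S \<and> x \<in> cnbh E (S ! i))"
  have j: "j < length S" "x \<in> cnbh E (S ! j)"
    using LeastI_ex[OF ex] unfolding j_def by simp_all
  have "x \<notin> cnbh E (S ! k)" if "k < j" for k
    using not_less_Least[of k "\<lambda>i. i < length S \<and> x \<in> cnbh E (S ! i)"] that j j_def by simp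
  then have "x \<in> pn E S j"
    using j unfolding pn_def by auto
  with j show ?thesis by blast
qed

lemma ex_pn_if_legal_dom_seq:
  assumes "legal_dom_seq V E S" "x \<in> V"
  shows "\<exists>j<length S. x \<in> pn E S j"
  using assms ex_pn_if_dominated unfolding legal_dom_seq_def dominating_def by metis

lemma self_footprinted_subset:
  assumes "legal_dom_seq V E S"
  shows "self_footprinted V E S \<subseteq> set S"
proof
  fix v assume "v \<in> self_footprinted V E S"
  then have "v \<in> V" "footprinter E S v = v"
    unfolding self_footprinted_def by auto
  with assms show "v \<in> set S"
    by (metis ex_pn_if_legal_dom_seq footprinter_eqI nth_mem)
qed

lemma self_footprinted_iff_pn:
  assumes "legal_dom_seq V E S" "k < length S"
  shows "S ! k \<in> self_footprinted V E S \<longleftrightarrow> S ! k \<in> pn E S k"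
proof
  have "S ! k \<in> V"
    using assms unfolding legal_dom_seq_def dominating_def by auto
  then obtain j where j: "j < length S" "S ! k \<in> pn E S j"
    using ex_pn_if_legal_dom_seq[OF assms(1)] by blast
  assume "S ! k \<in> self_footprinted V E S"
  then have "S ! j = S ! k"
    using footprinter_eqI[OF j] unfolding self_footprinted_def by simp
  then have "j = k"
    using assms j(1) unfolding legal_dom_seq_def by (simp add: nth_eq_iff_index_eq)
  with j show "S ! k \<in> pn E S k" by simp
next
  assume "S ! k \<in> pn E S k"
  then show "S ! k \<in> self_footprinted V E S"
    using assms footprinter_eqI unfolding self_footprinted_def legal_dom_seq_def dominating_def
    by fastforce
qed

lemma legal_seqs_I_stepwise:
  assumes "S \<in> legal_seqs_I V E I"
  shows "stepwise E (\<lambda>x D. if x \<in> I then x \<notin> D else \<exists>y. E x y \<and> y \<notin> D) {} S"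
proof -
  have L: "legal_dom_seq V E S" and I: "self_footprinted V E S = I"
    using assms unfolding legal_seqs_I_def legal_seqs_def by auto
  have "S ! k \<notin> (\<Union>j<k. cnbh E (S ! j))" if "k < length S" "S ! k \<in> I" for k
    using self_footprinted_iff_pn[OF L that(1)] I that(2) unfolding pn_def by simp
  moreover have "\<exists>y. E (S ! k) y \<and> y \<notin> (\<Union>j<k. cnbh E (S ! j))"
    if k: "k < length S" and not_I: "S ! k \<notin> I" for k
  proof -
    obtain y where "y \<in> pn E S k"
      using L k unfolding legal_dom_seq_def by blast
    moreover have "S ! k \<notin> pn E S k"
      using self_footprinted_iff_pn[OF L k] I not_I by simp
    ultimately show ?thesis
      unfolding pn_def cnbh_def by auto
  qed
  ultimately show ?thesis
    unfolding stepwise_iff_nth by simp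
qed

lemma finite_legal_seqs:
  assumes "finite V"
  shows "finite (legal_seqs V E)"
proof (rule finite_subset)
  show "legal_seqs V E \<subseteq> {xs. set xs \<subseteq> V \<and> length xs \<le> card V}"
    using assms
    by (auto simp: legal_seqs_def legal_dom_seq_def dominating_def distinct_card[symmetric]
        intro: card_mono)
  show "finite {xs. set xs \<subseteq> V \<and> length xs \<le> card V}"
    using assms by (rule finite_lists_length_le)
qed

lemma ex_legal_from_dominating:
  assumes "finite U" "U \<subseteq> V"
  shows "\<exists>S. distinct S \<and> set S \<subseteq> V \<and> legal_from E {} S \<and> U \<subseteq> (\<Union>v\<in>set S. cnbh E v)"
  using assms
proof (induction U rule: finite_induct)
  case (insert u U)
  then obtain S where S: "distinct S" "set S \<subseteq> V" "legal_from E {} S" "U \<subseteq> (\<Union>v\<in>set S. cnbh E v)"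
    by blast
  show ?case
  proof (cases "u \<in> (\<Union>v\<in>set S. cnbh E v)")
    case True
    with S show ?thesis by blast
  next
    case False
    have "u \<in> cnbh E u"
      by (simp add: cnbh_def)
    with False S insert.prems show ?thesis
      by (intro exI[of _ "S @ [u]"]) (auto simp: stepwise_append)
  qed
qed (intro exI[of _ "[]"], simp)

lemma legal_seqs_nonempty:
  assumes "finite V"
  shows "legal_seqs V E \<noteq> {}"
proof -
  obtain S where "distinct S" "set S \<subseteq> V" "legal_from E {} S" "V \<subseteq> (\<Union>v\<in>set S. cnbh E v)"
    using ex_legal_from_dominating[OF assms order_refl] by blast
  then have "S \<in> legal_seqs V E"
    unfolding legal_seqs_def legal_dom_seq_iff_legal_from dominating_def by blast
  then show ?thesis by blast
qed

definition grundy_seq :: "'a set \<Rightarrow> ('a \<Rightarrow> 'a \<Rightarrow> bool) \<Rightarrow> 'a list" where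
  "grundy_seq V E = (SOME S. S \<in> legal_seqs V E \<and> length S = grundy_dom V E)"

lemma grundy_seq:
  assumes "finite V"
  shows "grundy_seq V E \<in> legal_seqs V E" "length (grundy_seq V E) = grundy_dom V E"
proof -
  have "grundy_dom V E \<in> length ` legal_seqs V E"
    unfolding grundy_dom_def
    using finite_legal_seqs[OF assms] legal_seqs_nonempty[OF assms] by simp
  then have "\<exists>S. S \<in> legal_seqs V E \<and> length S = grundy_dom V E"
    by auto
  then show "grundy_seq V E \<in> legal_seqs V E" "length (grundy_seq V E) = grundy_dom V E"
    unfolding grundy_seq_def by (metis (mono_tags, lifting) someI_ex)+
qed

lemma length_le_grundy_dom:
  "finite V \<Longrightarrow> S \<in> legal_seqs V E \<Longrightarrow> length S \<le> grundy_dom V E"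
  unfolding grundy_dom_def by (simp add: finite_legal_seqs)

lemma grundy_dom_I_attained:
  assumes "finite V" "legal_seqs_I V E I \<noteq> {}"
  shows "\<exists>S\<in>legal_seqs_I V E I. grundy_dom_I V E I = ereal (real (length S))"
proof -
  have "finite (legal_seqs_I V E I)"
    using finite_legal_seqs[OF assms(1)] by (rule rev_finite_subset) (auto simp: legal_seqs_I_def)
  then have "Max (length ` legal_seqs_I V E I) \<in> length ` legal_seqs_I V E I"
    using assms(2) by simp
  with assms(2) show ?thesis
    unfolding grundy_dom_I_def by auto
qed

locale xjoin =
  fixes V :: "'a set" and E :: "'a \<Rightarrow> 'a \<Rightarrow> bool"
    and VV :: "'a \<Rightarrow> 'b set" and EE :: "'a \<Rightarrow> 'b \<Rightarrow> 'b \<Rightarrow> bool"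
  assumes graph: "graph V E"
    and graph_VV: "\<And>v. v \<in> V \<Longrightarrow> graph (VV v) (EE v)"
    and disjoint_VV: "\<And>u v. u \<in> V \<Longrightarrow> v \<in> V \<Longrightarrow> u \<noteq> v \<Longrightarrow> VV u \<inter> VV v = {}"
begin

abbreviation "XV \<equiv> xjoin_V V VV"
abbreviation "XE \<equiv> xjoin_E V E VV EE"

lemma VV_unique: "u \<in> V \<Longrightarrow> w \<in> V \<Longrightarrow> a \<in> VV u \<Longrightarrow> a \<in> VV w \<Longrightarrow> u = w"
  using disjoint_VV by blast

lemma cnbh_xjoin_E_imp_cnbh:
  assumes "u \<in> V" "z \<in> V" "a \<in> VV u" "b \<in> VV z" "b \<in> cnbh XE a"
  shows "z \<in> cnbh E u"
proof -
  have "b = a \<or> XE a b"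
    using assms(5) unfolding cnbh_def by auto
  then show ?thesis
  proof
    assume "b = a"
    then show ?thesis
      using assms VV_unique unfolding cnbh_def by blast
  next
    assume "XE a b"
    then consider w where "w \<in> V" "a \<in> VV w" "b \<in> VV w"
      | u' w where "u' \<in> V" "w \<in> V" "E u' w" "a \<in> VV u'" "b \<in> VV w"
      unfolding xjoin_E_def by blast
    then show ?thesis
    proof cases
      case (1 w)
      then have "w = u" "w = z"
        using assms VV_unique by blast+
      then show ?thesis
        by (simp add: cnbh_def)
    next
      case (2 u' w)
      then have "u' = u" "w = z"
        using assms VV_unique by blast+
      with \<open>E u' w\<close> show ?thesis
        by (simp add: cnbh_def)
    qed
  qed
qed

lemma cnbh_xjoin_E_inside:
  assumes "x \<in> V" "a \<in> VV x"
  shows "cnbh XE a \<inter> VV x = cnbh (EE x) a"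
proof -
  have "EE x a b \<Longrightarrow> b \<in> VV x" for b
    using graph_VV[OF assms(1)] unfolding graph_def by blast
  moreover have "\<not> E x x"
    using graph unfolding graph_def by blast
  moreover have "w = x" if "w \<in> V" "a \<in> VV w \<or> b \<in> VV w" "b \<in> VV x" for w b
    using that assms VV_unique by blast
  ultimately show ?thesis
    using assms unfolding cnbh_def xjoin_E_def by blast
qed

definition pick :: "'a \<Rightarrow> 'b" where
  "pick v = (SOME a. a \<in> VV v)"

definition block :: "'a set \<Rightarrow> 'a \<Rightarrow> 'b list" where
  "block I v = (if v \<in> I then grundy_seq (VV v) (EE v) else [pick v])"

definition join_seq :: "'a set \<Rightarrow> 'a list \<Rightarrow> 'b list" where
  "join_seq I S = concat (map (block I) S)"

lemma pick_in_VV: "v \<in> V \<Longrightarrow> pick v \<in> VV v"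
  using graph_VV unfolding pick_def graph_def by (simp add: some_in_eq)

lemma grundy_seq_VV:
  assumes "v \<in> V"
  shows "legal_dom_seq (VV v) (EE v) (grundy_seq (VV v) (EE v))"
    and "length (grundy_seq (VV v) (EE v)) = grundy_dom (VV v) (EE v)"
  using grundy_seq graph_VV[OF assms] unfolding graph_def legal_seqs_def by auto

lemma block_in_VV:
  assumes "v \<in> V"
  shows "distinct (block I v)" "set (block I v) \<subseteq> VV v"
  using grundy_seq_VV[OF assms] pick_in_VV[OF assms]
  unfolding block_def legal_dom_seq_def dominating_def by auto

lemma block_nonempty:
  assumes "v \<in> V"
  shows "block I v \<noteq> []"
proof -
  have "VV v \<noteq> {}"
    using graph_VV[OF assms] unfolding graph_def by blast
  then show ?thesis
    using grundy_seq_VV(1)[OF assms] unfolding block_def legal_dom_seq_def dominating_def by auto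
qed

lemma distinct_join_seq:
  assumes "distinct S" "set S \<subseteq> V"
  shows "distinct (join_seq I S)"
  using assms
proof (induction S)
  case (Cons x S)
  have x: "x \<in> V" "x \<notin> set S"
    using Cons.prems by auto
  have "set (join_seq I S) \<subseteq> (\<Union>y\<in>set S. VV y)"
    using Cons.prems block_in_VV(2) unfolding join_seq_def by force
  moreover have "VV x \<inter> VV y = {}" if "y \<in> set S" for y
    using disjoint_VV[OF x(1), of y] x(2) that Cons.prems(2) by auto
  ultimately have "set (block I x) \<inter> set (join_seq I S) = {}"
    using block_in_VV(2)[OF x(1)] by blast
  then show ?case
    using Cons block_in_VV(1)[OF x(1)] unfolding join_seq_def by simp
qed (simp add: join_seq_def)

lemma legal_from_join_seq:
  assumes "stepwise E (\<lambda>x D. if x \<in> I then x \<notin> D else \<exists>y. E x y \<and> y \<notin> D) D S"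
    and "set S \<subseteq> V" and "\<forall>z\<in>V - D. VV z \<inter> D' = {}"
  shows "legal_from XE D' (join_seq I S)"
  using assms
proof (induction S arbitrary: D D')
  case (Cons x S)
  have x: "x \<in> V"
    using Cons.prems(2) by simp
  have head: "legal_from XE D' (block I x)"
  proof (cases "x \<in> I")
    case True
    have "legal_from (EE x) {} (block I x)"
      using grundy_seq_VV(1)[OF x] True unfolding block_def legal_dom_seq_iff_legal_from by simp
    moreover have "\<forall>a\<in>set (block I x). cnbh (EE x) a = cnbh XE a \<inter> VV x"
      using block_in_VV(2)[OF x] cnbh_xjoin_E_inside[OF x] by auto
    moreover have "D' \<inter> VV x \<subseteq> {}"
      using Cons.prems(1,3) x True by auto
    ultimately show ?thesis
      by (rule legal_from_transfer)
  next
    case False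
    then obtain y where y: "E x y" "y \<notin> D"
      using Cons.prems(1) by auto
    then have "y \<in> V"
      using graph unfolding graph_def by blast
    then have "pick y \<notin> D'" "XE (pick x) (pick y)"
      using Cons.prems(3) x y pick_in_VV unfolding xjoin_E_def by blast+
    then have "cnbh XE (pick x) - D' \<noteq> {}"
      unfolding cnbh_def by blast
    with False show ?thesis
      unfolding block_def by simp
  qed
  have "VV z \<inter> (D' \<union> (\<Union>a\<in>set (block I x). cnbh XE a)) = {}" if "z \<in> V - (D \<union> cnbh E x)" for z
    using that Cons.prems(3) block_in_VV(2)[OF x] cnbh_xjoin_E_imp_cnbh[OF x] by blast
  then have "legal_from XE (D' \<union> (\<Union>a\<in>set (block I x). cnbh XE a)) (join_seq I S)"
    using Cons.prems(1,2) by (intro Cons.IH[of "D \<union> cnbh E x"]) auto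
  with head show ?case
    by (simp add: join_seq_def stepwise_append)
qed (simp add: join_seq_def)

lemma dominating_join_seq:
  assumes "S \<in> legal_seqs_I V E I"
  shows "dominating XV XE (set (join_seq I S))"
  unfolding dominating_def
proof (intro conjI ballI)
  have L: "legal_dom_seq V E S" and I: "self_footprinted V E S = I"
    using assms unfolding legal_seqs_I_def legal_seqs_def by auto
  then have SV: "set S \<subseteq> V"
    unfolding legal_dom_seq_def dominating_def by simp
  then show "set (join_seq I S) \<subseteq> XV"
    using block_in_VV(2) unfolding join_seq_def xjoin_V_def by fastforce
  fix b assume "b \<in> XV"
  then obtain x where x: "x \<in> V" "b \<in> VV x"
    unfolding xjoin_V_def by blast
  show "\<exists>a\<in>set (join_seq I S). b \<in> cnbh XE a"
  proof (cases "x \<in> I")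
    case True
    then have "x \<in> set S"
      using self_footprinted_subset[OF L] I by blast
    obtain a where "a \<in> set (block I x)" "b \<in> cnbh (EE x) a"
      using grundy_seq_VV(1)[OF x(1)] True x(2)
      unfolding block_def legal_dom_seq_def dominating_def by auto
    with \<open>x \<in> set S\<close> show ?thesis
      using cnbh_xjoin_E_inside[OF x(1)] block_in_VV(2)[OF x(1)]
      unfolding join_seq_def by fastforce
  next
    case False
    obtain j where j: "j < length S" "x \<in> pn E S j"
      using ex_pn_if_legal_dom_seq[OF L x(1)] by blast
    then have "S ! j \<noteq> x"
      using False I footprinter_eqI x(1) unfolding self_footprinted_def by auto
    with j have "E (S ! j) x"
      unfolding pn_def cnbh_def by auto
    moreover have Sj: "S ! j \<in> set S" "S ! j \<in> V"
      using j SV by auto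
    moreover obtain a where "a \<in> set (block I (S ! j))"
      using block_nonempty[OF Sj(2)] by (meson last_in_set)
    ultimately show ?thesis
      using x block_in_VV(2)[OF Sj(2)] unfolding join_seq_def cnbh_def xjoin_E_def by fastforce
  qed
qed

lemma length_join_seq:
  assumes "distinct S" "set S \<subseteq> V" "I \<subseteq> set S"
  shows "length (join_seq I S) + card I = length S + (\<Sum>v\<in>I. grundy_dom (VV v) (EE v))"
proof -
  have "length (join_seq I S) = (\<Sum>x\<in>set S. length (block I x))"
    unfolding join_seq_def by (simp add: length_concat sum_list_distinct_conv_sum_set[OF assms(1)])
  also have "\<dots> = (\<Sum>x\<in>set S - I. length (block I x)) + (\<Sum>x\<in>I. length (block I x))"
    using assms(3) by (simp add: sum.subset_diff)
  also have "\<dots> = card (set S - I) + (\<Sum>v\<in>I. grundy_dom (VV v) (EE v))"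
    using assms(2,3) grundy_seq_VV(2) unfolding block_def by (intro arg_cong2[where f = "(+)"] sum.cong) auto
  finally show ?thesis
    using assms card_mono[OF _ assms(3)] by (simp add: card_Diff_subset finite_subset distinct_card)
qed

lemma grundy_dom_xjoin_ge:
  assumes "S \<in> legal_seqs_I V E I"
  shows "length S + (\<Sum>v\<in>I. grundy_dom (VV v) (EE v)) \<le> grundy_dom XV XE + card I"
proof -
  have L: "legal_dom_seq V E S" and "self_footprinted V E S = I"
    using assms unfolding legal_seqs_I_def legal_seqs_def by auto
  then have "distinct S" "set S \<subseteq> V" "I \<subseteq> set S"
    using self_footprinted_subset[OF L] unfolding legal_dom_seq_def dominating_def by auto
  moreover have "legal_from XE {} (join_seq I S)"
    using legal_seqs_I_stepwise[OF assms] \<open>set S \<subseteq> V\<close> by (rule legal_from_join_seq) simp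
  ultimately have "join_seq I S \<in> legal_seqs XV XE"
    using dominating_join_seq[OF assms] distinct_join_seq
    unfolding legal_seqs_def legal_dom_seq_iff_legal_from by simp
  moreover have "finite XV"
    using graph graph_VV unfolding graph_def xjoin_V_def by simp
  ultimately have "length (join_seq I S) \<le> grundy_dom XV XE"
    by (simp add: length_le_grundy_dom)
  then show ?thesis
    using length_join_seq[OF \<open>distinct S\<close> \<open>set S \<subseteq> V\<close> \<open>I \<subseteq> set S\<close>] by linarith
qed

end

theorem lemma1:
  fixes V :: "'a set" and E :: "'a \<Rightarrow> 'a \<Rightarrow> bool"
    and VV :: "'a \<Rightarrow> 'b set" and EE :: "'a \<Rightarrow> 'b \<Rightarrow> 'b \<Rightarrow> bool"
  assumes "graph V E"
    and "\<And>v. v \<in> V \<Longrightarrow> graph (VV v) (EE v)"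
    and "\<And>u v. u \<in> V \<Longrightarrow> v \<in> V \<Longrightarrow> u \<noteq> v \<Longrightarrow> VV u \<inter> VV v = {}"
  shows "ereal (real (grundy_dom (xjoin_V V VV) (xjoin_E V E VV EE))) \<ge>
    Max {grundy_dom_I V E I + ereal (real (\<Sum>v\<in>I. grundy_dom (VV v) (EE v))) - ereal (real (card I))
         | I. independent V E I}"
proof -
  interpret xjoin V E VV EE
    using assms by unfold_locales
  have "finite V"
    using assms(1) unfolding graph_def by blast
  have "grundy_dom_I V E I + ereal (real (\<Sum>v\<in>I. grundy_dom (VV v) (EE v))) - ereal (real (card I))
        \<le> ereal (real (grundy_dom XV XE))" for I
  proof (cases "legal_seqs_I V E I = {}")
    case False
    then obtain S where S: "S \<in> legal_seqs_I V E I" "grundy_dom_I V E I = ereal (real (length S))"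
      using grundy_dom_I_attained[OF \<open>finite V\<close>] by blast
    have "real (length S + (\<Sum>v\<in>I. grundy_dom (VV v) (EE v))) \<le> real (grundy_dom XV XE + card I)"
      using grundy_dom_xjoin_ge[OF S(1)] by (rule of_nat_mono)
    with S(2) show ?thesis
      by simp
  qed (simp add: grundy_dom_I_def)
  moreover have "finite {I. independent V E I}"
    using \<open>finite V\<close> by (auto simp: independent_def intro: rev_finite_subset[of "Pow V"])
  moreover have "independent V E {}"
    by (simp add: independent_def)
  ultimately show ?thesis
    by (subst Max_le_iff) auto
qed

end
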